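(* Let $K$ be a field, let $\mathscr C$ be a $K$-coalgebra with several objects, and let $\mathcal M$ be a right $\mathscr C$-comodule. Let $X\in Ob(\mathscr C)$ and $m\in\mathcal M(X)$. Then there exists a subobject $\mathcal N\subseteq\mathcal M$ in the category $Com^{\mathscr C}$ of right $\mathscr C$-comodules such that $m\in\mathcal N(X)$ and $\mathcal N(Y)$ is a finite dimensional $K$-vector space for every $Y\in Ob(\mathscr C)$.
   Context: A $K$-coalgebra with several objects $\mathscr C$ consists of a set $Ob(\mathscr C)$, a $K$-vector space $\mathscr C(X,Y)$ for all $X,Y\in Ob(\mathscr C)$, $K$-linear comultiplications $\delta_{XYZ}:\mathscr C(X,Z)\to\mathscr C(Y,Z)\otimes\mathscr C(X,Y)$, written $\delta_{XYZ}(f)=f_{Y1}\otimes f_{Y2}$ (summation suppressed), and counits $\epsilon_X:\mathscr C(X,X)\to K$, such that $(\delta_{YWZ}\otimes \mathrm{id})\circ\delta_{XYZ}=(\mathrm{id}\otimes\delta_{XYW})\circ\delta_{XWZ}$ as maps $\mathscr C(X,Z)\to\mathscr C(W,Z)\otimes\mathscr C(Y,W)\otimes\mathscr C(X,Y)$, and $(\epsilon_Y\otimes\mathrm{id})\circ\delta_{XYY}=\mathrm{id}=(\mathrm{id}\otimes\epsilon_X)\circ\delta_{XXY}$ on $\mathscr C(X,Y)$. Tensor products are over $K$. A right $\mathscr C$-comodule $\mathcal M$ consists of vector spaces $\mathcal M(X)$, $X\in Ob(\mathscr C)$, and linear coactions $\rho_{XY}:\mathcal M(X)\to\mathcal M(Y)\otimes\mathscr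 C(X,Y)$, written $\rho_{XY}(m)=m_{Y0}\otimes m_{Y1}$, such that $(\rho_{ZY}\otimes\mathrm{id}_{\mathscr C(X,Z)})\circ\rho_{XZ}=(\mathrm{id}_{\mathcal M(Y)}\otimes\delta_{XZY})\circ\rho_{XY}$ and $(\mathrm{id}\otimes\epsilon_X)\circ\rho_{XX}=\mathrm{id}$. A morphism $\phi:\mathcal M\to\mathcal N$ is a family of linear maps $\phi(X):\mathcal M(X)\to\mathcal N(X)$ with $\rho^{\mathcal N}_{XY}\circ\phi(X)=(\phi(Y)\otimes\mathrm{id})\circ\rho^{\mathcal M}_{XY}$; this gives the category $Com^{\mathscr C}$. A subobject $\mathcal N\subseteq\mathcal M$ means a family of subspaces $\mathcal N(Y)\subseteq\mathcal M(Y)$ with $\rho_{YZ}(\mathcal N(Y))\subseteq\mathcal N(Z)\otimes\mathscr C(Y,Z)$, so that $\mathcal N$ is a comodule with the restricted coactions. *)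

theory Defs
  imports "HOL.Vector_Spaces"
begin

text \<open>A K-vector space is modelled as a subspace of an ambient type carrying a
scalar multiplication s with vector_space s (library locale).  An element
of a tensor product A (x) B of ambient spaces is represented by a finite formal
sum, i.e. a list of pairs [(a1,b1),...,(an,bn)] standing for the sum of the ai (x) bi.
Two lists denote the same tensor iff the difference of the corresponding
elements of the free vector space on A x B lies in the span of the usual
bi(tri)linearity relations (the standard construction of the tensor product).
Over a field, V (x) W embeds into A (x) B for subspaces V, W, so this equality is
also equality in V (x) W.\<close>

definition ind :: "'p \<Rightarrow> 'p \<Rightarrow> 'k::zero_neq_one" where
  "ind q p = (if p = q then 1 else 0)"

definition free :: "'p list \<Rightarrow> 'p \<Rightarrow> 'k::semiring_1" where
  "free xs p = of_nat (count_list xs p)"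

inductive_set rspan :: "('p \<Rightarrow> 'k::field) set \<Rightarrow> ('p \<Rightarrow> 'k) set" for G where
  zero: "(\<lambda>_. 0) \<in> rspan G"
| step: "r \<in> rspan G \<Longrightarrow> g \<in> G \<Longrightarrow> (\<lambda>p. r p + c * g p) \<in> rspan G"

definition gens2 :: "('k::field \<Rightarrow> 'a::ab_group_add \<Rightarrow> 'a) \<Rightarrow> ('k \<Rightarrow> 'b::ab_group_add \<Rightarrow> 'b)
    \<Rightarrow> ('a \<times> 'b \<Rightarrow> 'k) set" where
  "gens2 sa sb =
     {(\<lambda>p. ind (a + a', b) p - ind (a, b) p - ind (a', b) p) | a a' b. True} \<union>
     {(\<lambda>p. ind (a, b + b') p - ind (a, b) p - ind (a, b') p) | a b b'. True} \<union>
     {(\<lambda>p. ind (sa c a, b) p - c * ind (a, b) p) | c a b. True} \<union>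
     {(\<lambda>p. ind (a, sb c b) p - c * ind (a, b) p) | c a b. True}"

definition gens3 :: "('k::field \<Rightarrow> 'a::ab_group_add \<Rightarrow> 'a) \<Rightarrow> ('k \<Rightarrow> 'b::ab_group_add \<Rightarrow> 'b)
    \<Rightarrow> ('k \<Rightarrow> 'c::ab_group_add \<Rightarrow> 'c) \<Rightarrow> ('a \<times> 'b \<times> 'c \<Rightarrow> 'k) set" where
  "gens3 sa sb sc =
     {(\<lambda>p. ind (a + a', b, e) p - ind (a, b, e) p - ind (a', b, e) p) | a a' b e. True} \<union>
     {(\<lambda>p. ind (a, b + b', e) p - ind (a, b, e) p - ind (a, b', e) p) | a b b' e. True} \<union>
     {(\<lambda>p. ind (a, b, e + e') p - ind (a, b, e) p - ind (a, b, e') p) | a b e e'. True} \<union>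
     {(\<lambda>p. ind (sa c a, b, e) p - c * ind (a, b, e) p) | c a b e. True} \<union>
     {(\<lambda>p. ind (a, sb c b, e) p - c * ind (a, b, e) p) | c a b e. True} \<union>
     {(\<lambda>p. ind (a, b, sc c e) p - c * ind (a, b, e) p) | c a b e. True}"

definition teq2 :: "('k::field \<Rightarrow> 'a::ab_group_add \<Rightarrow> 'a) \<Rightarrow> ('k \<Rightarrow> 'b::ab_group_add \<Rightarrow> 'b)
    \<Rightarrow> ('a \<times> 'b) list \<Rightarrow> ('a \<times> 'b) list \<Rightarrow> bool" where
  "teq2 sa sb xs ys \<longleftrightarrow> (\<lambda>p. free xs p - free ys p) \<in> rspan (gens2 sa sb)"

definition teq3 :: "('k::field \<Rightarrow> 'a::ab_group_add \<Rightarrow> 'a) \<Rightarrow> ('k \<Rightarrow> 'b::ab_group_add \<Rightarrow> 'b)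
    \<Rightarrow> ('k \<Rightarrow> 'c::ab_group_add \<Rightarrow> 'c)
    \<Rightarrow> ('a \<times> 'b \<times> 'c) list \<Rightarrow> ('a \<times> 'b \<times> 'c) list \<Rightarrow> bool" where
  "teq3 sa sb sc xs ys \<longleftrightarrow> (\<lambda>p. free xs p - free ys p) \<in> rspan (gens3 sa sb sc)"

text \<open>Objects: the type 'o.  C X Y \<subseteq> 'c is the space \<C>(X,Y); delta X Y Z f
is a formal sum representing \<delta>_XYZ(f) \<in> \<C>(Y,Z) (x) \<C>(X,Y); eps X is \<epsilon>_X.\<close>
definition coalgebra_so ::
  "('k::field \<Rightarrow> 'c::ab_group_add \<Rightarrow> 'c) \<Rightarrow> ('o \<Rightarrow> 'o \<Rightarrow> 'c set)
   \<Rightarrow> ('o \<Rightarrow> 'o \<Rightarrow> 'o \<Rightarrow> 'c \<Rightarrow> ('c \<times> 'c) list) \<Rightarrow> ('o \<Rightarrow> 'c \<Rightarrow> 'k) \<Rightarrow> bool" where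
  "coalgebra_so sC C delta eps \<longleftrightarrow>
     vector_space sC \<and>
     (\<forall>X Y. module.subspace sC (C X Y)) \<and>
     (\<forall>X Y Z f. f \<in> C X Z \<longrightarrow> set (delta X Y Z f) \<subseteq> C Y Z \<times> C X Y) \<and>
     (\<forall>X Y Z f g. f \<in> C X Z \<longrightarrow> g \<in> C X Z \<longrightarrow>
        teq2 sC sC (delta X Y Z (f + g)) (delta X Y Z f @ delta X Y Z g)) \<and>
     (\<forall>X Y Z c f. f \<in> C X Z \<longrightarrow>
        teq2 sC sC (delta X Y Z (sC c f)) (map (\<lambda>(a, b). (sC c a, b)) (delta X Y Z f))) \<and>
     (\<forall>X f g. f \<in> C X X \<longrightarrow> g \<in> C X X \<longrightarrow> eps X (f + g) = eps X f + eps X g) \<and>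
     (\<forall>X c f. f \<in> C X X \<longrightarrow> eps X (sC c f) = c * eps X f) \<and>
     (\<forall>X Y W Z f. f \<in> C X Z \<longrightarrow>
        teq3 sC sC sC
          (concat (map (\<lambda>(a, b). map (\<lambda>(a1, a2). (a1, a2, b)) (delta Y W Z a)) (delta X Y Z f)))
          (concat (map (\<lambda>(a, b). map (\<lambda>(b1, b2). (a, b1, b2)) (delta X Y W b)) (delta X W Z f)))) \<and>
     (\<forall>X Y f. f \<in> C X Y \<longrightarrow>
        sum_list (map (\<lambda>(a, b). sC (eps Y a) b) (delta X Y Y f)) = f \<and>
        sum_list (map (\<lambda>(a, b). sC (eps X b) a) (delta X X Y f)) = f)"

text \<open>M X \<subseteq> 'm is \<M>(X); rho X Y m is a formal sum representing
\<rho>_XY(m) \<in> \<M>(Y) (x) \<C>(X,Y).\<close>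
definition right_comodule ::
  "('k::field \<Rightarrow> 'c::ab_group_add \<Rightarrow> 'c) \<Rightarrow> ('o \<Rightarrow> 'o \<Rightarrow> 'c set)
   \<Rightarrow> ('o \<Rightarrow> 'o \<Rightarrow> 'o \<Rightarrow> 'c \<Rightarrow> ('c \<times> 'c) list) \<Rightarrow> ('o \<Rightarrow> 'c \<Rightarrow> 'k)
   \<Rightarrow> ('k \<Rightarrow> 'm::ab_group_add \<Rightarrow> 'm) \<Rightarrow> ('o \<Rightarrow> 'm set)
   \<Rightarrow> ('o \<Rightarrow> 'o \<Rightarrow> 'm \<Rightarrow> ('m \<times> 'c) list) \<Rightarrow> bool" where
  "right_comodule sC C delta eps sM M rho \<longleftrightarrow>
     vector_space sM \<and>
     (\<forall>X. module.subspace sM (M X)) \<and>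
     (\<forall>X Y m. m \<in> M X \<longrightarrow> set (rho X Y m) \<subseteq> M Y \<times> C X Y) \<and>
     (\<forall>X Y m n. m \<in> M X \<longrightarrow> n \<in> M X \<longrightarrow>
        teq2 sM sC (rho X Y (m + n)) (rho X Y m @ rho X Y n)) \<and>
     (\<forall>X Y c m. m \<in> M X \<longrightarrow>
        teq2 sM sC (rho X Y (sM c m)) (map (\<lambda>(a, b). (sM c a, b)) (rho X Y m))) \<and>
     (\<forall>X Y Z m. m \<in> M X \<longrightarrow>
        teq3 sM sC sC
          (concat (map (\<lambda>(n, b). map (\<lambda>(n0, n1). (n0, n1, b)) (rho Z Y n)) (rho X Z m)))
          (concat (map (\<lambda>(n, g). map (\<lambda>(g1, g2). (n, g1, g2)) (delta X Z Y g)) (rho X Y m)))) \<and>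
     (\<forall>X m. m \<in> M X \<longrightarrow> sum_list (map (\<lambda>(n, g). sM (eps X g) n) (rho X X m)) = m)"

text \<open>Subobject \<N> \<subseteq> \<M>: subspaces N Y \<subseteq> M Y with \<rho>_YZ(N Y) \<subseteq> N Z (x) \<C>(Y,Z),
i.e. each \<rho>_YZ(n) is represented by some formal sum with entries in N Z \<times> C Y Z.\<close>
definition subcomodule ::
  "('k::field \<Rightarrow> 'c::ab_group_add \<Rightarrow> 'c) \<Rightarrow> ('o \<Rightarrow> 'o \<Rightarrow> 'c set)
   \<Rightarrow> ('k \<Rightarrow> 'm::ab_group_add \<Rightarrow> 'm) \<Rightarrow> ('o \<Rightarrow> 'm set)
   \<Rightarrow> ('o \<Rightarrow> 'o \<Rightarrow> 'm \<Rightarrow> ('m \<times> 'c) list) \<Rightarrow> ('o \<Rightarrow> 'm set) \<Rightarrow> bool" where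
  "subcomodule sC C sM M rho N \<longleftrightarrow>
     (\<forall>Y. module.subspace sM (N Y) \<and> N Y \<subseteq> M Y) \<and>
     (\<forall>Y Z n. n \<in> N Y \<longrightarrow>
        (\<exists>ys. set ys \<subseteq> N Z \<times> C Y Z \<and> teq2 sM sC (rho Y Z n) ys))"

end

theory Submission
  imports Defs "HOL-Library.Function_Algebras"
begin

text \<open>
  The subcomodule generated by \<open>m \<in> M(X)\<close> is
  \<open>N(Y) = {(id \<otimes> \<phi>) \<rho>\<^sub>X\<^sub>Y(m) | \<phi> a linear functional on C(X,Y)}\<close>.
  It lies in the span of the finitely many first tensor factors of \<open>\<rho>\<^sub>X\<^sub>Y(m)\<close>, so it is
  finite dimensional, and it contains \<open>m = (id \<otimes> \<epsilon>\<^sub>X) \<rho>\<^sub>X\<^sub>X(m)\<close>. By coassociativity,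
  \<open>\<rho>\<^sub>Y\<^sub>Z((id \<otimes> \<phi>) \<rho>\<^sub>X\<^sub>Y(m)) = (id \<otimes> id \<otimes> \<phi>) (id \<otimes> \<delta>\<^sub>X\<^sub>Y\<^sub>Z) \<rho>\<^sub>X\<^sub>Z(m)\<close>. Expanding the
  \<open>C(Y,Z)\<close>-factor in a basis \<open>b\<^sub>i\<close> with dual functionals \<open>\<psi>\<^sub>i\<close> turns this into
  \<open>\<Sum>\<^sub>i (id \<otimes> (\<psi>\<^sub>i * \<phi>)) \<rho>\<^sub>X\<^sub>Z(m) \<otimes> b\<^sub>i\<close>, where \<open>(\<psi> * \<phi>)(g) = \<Sum> \<psi>(g\<^sub>1) \<phi>(g\<^sub>2)\<close> is the
  convolution, a linear functional on \<open>C(X,Z)\<close>. Hence \<open>\<rho>\<^sub>Y\<^sub>Z(N(Y)) \<subseteq> N(Z) \<otimes> C(Y,Z)\<close>.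

  Equalities of formal tensors are transported along (bi)linear maps by extending those maps
  linearly to finitely supported coefficient functions.
\<close>

section \<open>Formal linear combinations\<close>

definition supp :: "('p \<Rightarrow> 'k::zero) \<Rightarrow> 'p set" where
  "supp r = {p. r p \<noteq> 0}"

lemma supp_zero [simp]: "supp 0 = {}"
  by (simp add: supp_def)

lemma finite_supp_ind [simp]: "finite (supp (ind q))"
  by (rule finite_subset[of _ "{q}"]) (auto simp: supp_def ind_def)

lemma finite_supp_add [simp]:
  "finite (supp r) \<Longrightarrow> finite (supp g) \<Longrightarrow> finite (supp (r + g :: 'p \<Rightarrow> 'k::monoid_add))"
  by (rule finite_subset[of _ "supp r \<union> supp g"]) (auto simp: supp_def)

lemma finite_supp_diff [simp]:
  "finite (supp r) \<Longrightarrow> finite (supp g) \<Longrightarrow> finite (supp (r - g :: 'p \<Rightarrow> 'k::group_add))"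
  by (rule finite_subset[of _ "supp r \<union> supp g"]) (auto simp: supp_def)

lemma free_Nil [simp]: "free [] = 0"
  by (simp add: free_def fun_eq_iff)

lemma free_Cons [simp]: "free (x # xs) = ind x + free xs"
  by (simp add: free_def ind_def fun_eq_iff)

lemma free_append [simp]: "free (xs @ ys) = free xs + free ys"
  by (simp add: free_def fun_eq_iff)

lemma finite_supp_free [simp]: "finite (supp (free xs))"
  by (rule finite_subset[of _ "set xs"]) (auto simp: supp_def free_def, metis count_list_0_iff of_nat_0)

definition fscale :: "'k::field \<Rightarrow> ('p \<Rightarrow> 'k) \<Rightarrow> 'p \<Rightarrow> 'k" where
  "fscale c f = (\<lambda>p. c * f p)"

lemma finite_supp_fscale [simp]: "finite (supp r) \<Longrightarrow> finite (supp (fscale c r))"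
  by (rule finite_subset[of _ "supp r"]) (auto simp: supp_def fscale_def)

global_interpretation fun_space: vector_space "fscale :: 'k::field \<Rightarrow> ('p \<Rightarrow> 'k) \<Rightarrow> _"
  by unfold_locales (simp_all add: fscale_def fun_eq_iff algebra_simps)

lemma rspan_eq_span: "rspan G = fun_space.span G"
proof
  show "rspan G \<subseteq> fun_space.span G"
  proof
    fix r assume "r \<in> rspan G"
    then show "r \<in> fun_space.span G"
    proof induction
      case zero
      then show ?case using fun_space.span_zero by (simp add: zero_fun_def)
    next
      case (step r g c)
      have "(\<lambda>p. r p + c * g p) = r + fscale c g"
        by (simp add: fun_eq_iff fscale_def)
      with step show ?case
        by (simp add: fun_space.span_add fun_space.span_scale fun_space.span_base)
    qed
  qed
  have "fun_space.subspace (rspan G)"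
    unfolding fun_space.subspace_def
  proof (intro conjI ballI allI)
    show "0 \<in> rspan G" using rspan.zero by (simp add: zero_fun_def)
    show "fscale c r \<in> rspan G" if "r \<in> rspan G" for c r
      using that
    proof induction
      case (step r g d)
      then show ?case
        using rspan.step[of "fscale c r" G g "c * d"] by (simp add: fscale_def algebra_simps)
    qed (simp add: fscale_def rspan.zero)
    show "r + q \<in> rspan G" if "r \<in> rspan G" "q \<in> rspan G" for r q
      using that(2)
    proof induction
      case (step q g d)
      then show ?case
        using rspan.step[of "r + q" G g d] by (simp add: plus_fun_def algebra_simps)
    qed (simp add: that(1))
  qed
  moreover have "G \<subseteq> rspan G"
    using rspan.step[OF rspan.zero, where c = 1] by auto
  ultimately show "fun_space.span G \<subseteq> rspan G"
    by (rule fun_space.span_minimal[rotated])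
qed

context vector_space
begin

definition lincomb :: "('p \<Rightarrow> 'b) \<Rightarrow> ('p \<Rightarrow> 'a) \<Rightarrow> 'b" where
  "lincomb \<beta> r = (\<Sum>p\<in>supp r. scale (r p) (\<beta> p))"

lemma lincomb_eq_sum:
  "finite S \<Longrightarrow> supp r \<subseteq> S \<Longrightarrow> lincomb \<beta> r = (\<Sum>p\<in>S. scale (r p) (\<beta> p))"
  unfolding lincomb_def by (rule sum.mono_neutral_left) (auto simp: supp_def)

lemma lincomb_add:
  assumes "finite (supp r)" "finite (supp q)"
  shows "lincomb \<beta> (r + q) = lincomb \<beta> r + lincomb \<beta> q"
proof -
  let ?S = "supp r \<union> supp q"
  have "lincomb \<beta> (r + q) = (\<Sum>p\<in>?S. scale (r p) (\<beta> p)) + (\<Sum>p\<in>?S. scale (q p) (\<beta> p))"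
    using assms by (subst lincomb_eq_sum[of ?S]) (auto simp: supp_def scale_left_distrib sum.distrib)
  also have "\<dots> = lincomb \<beta> r + lincomb \<beta> q"
    using assms by (simp add: lincomb_eq_sum[of ?S])
  finally show ?thesis .
qed

lemma lincomb_fscale:
  assumes "finite (supp r)"
  shows "lincomb \<beta> (fscale c r) = scale c (lincomb \<beta> r)"
proof -
  have "lincomb \<beta> (fscale c r) = (\<Sum>p\<in>supp r. scale (fscale c r p) (\<beta> p))"
    by (rule lincomb_eq_sum) (use assms in \<open>auto simp: supp_def fscale_def\<close>)
  then show ?thesis by (simp add: lincomb_def fscale_def scale_sum_right)
qed

lemma lincomb_diff:
  assumes "finite (supp r)" "finite (supp q)"
  shows "lincomb \<beta> (r - q) = lincomb \<beta> r - lincomb \<beta> q"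
proof -
  let ?S = "supp r \<union> supp q"
  have "lincomb \<beta> (r - q) = (\<Sum>p\<in>?S. scale (r p) (\<beta> p)) - (\<Sum>p\<in>?S. scale (q p) (\<beta> p))"
    using assms by (subst lincomb_eq_sum[of ?S]) (auto simp: supp_def scale_left_diff_distrib sum_subtractf)
  also have "\<dots> = lincomb \<beta> r - lincomb \<beta> q"
    using assms by (simp add: lincomb_eq_sum[of ?S])
  finally show ?thesis .
qed

lemma lincomb_zero [simp]: "lincomb \<beta> 0 = 0"
  by (simp add: lincomb_def supp_def)

lemma lincomb_ind [simp]: "lincomb \<beta> (ind q) = \<beta> q"
  by (simp add: lincomb_eq_sum[of "{q}"] supp_def ind_def)

text \<open>The induction method eta-expands partial applications such as \<open>free xs\<close>; dropping the
  pointwise rules for \<open>0\<close> and \<open>+\<close> lets the simplifier contract them again.\<close>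

lemma lincomb_free: "lincomb \<beta> (free xs) = sum_list (map \<beta> xs)"
  by (induction xs) (simp_all add: lincomb_add del: zero_fun_apply plus_fun_apply)

lemma lincomb_span:
  assumes "r \<in> fun_space.span G" "\<And>g. g \<in> G \<Longrightarrow> finite (supp g)"
  shows "lincomb \<beta> r \<in> span (lincomb \<beta> ` G)"
proof -
  from assms(1) have "finite (supp r) \<and> lincomb \<beta> r \<in> span (lincomb \<beta> ` G)"
  proof (induction rule: fun_space.span_induct_alt)
    case base
    then show ?case by (simp add: span_zero del: zero_fun_apply)
  next
    case (step c g r)
    then show ?case
      using assms(2)[OF step(1)]
      by (simp add: lincomb_add lincomb_fscale span_add span_scale span_base del: plus_fun_apply)
  qed
  then show ?thesis ..
qed

end

section \<open>Formal tensors\<close>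

definition eq_mod_span :: "('p \<Rightarrow> 'k::field) set \<Rightarrow> ('p \<Rightarrow> 'k) \<Rightarrow> ('p \<Rightarrow> 'k) \<Rightarrow> bool" where
  "eq_mod_span G f g \<longleftrightarrow> f - g \<in> fun_space.span G"

lemma eq_mod_span_refl [simp]: "eq_mod_span G f f"
  by (simp add: eq_mod_span_def fun_space.span_zero)

lemma eq_mod_span_sym: "eq_mod_span G f g \<Longrightarrow> eq_mod_span G g f"
  unfolding eq_mod_span_def using fun_space.span_neg by fastforce

lemma eq_mod_span_trans [trans]:
  "eq_mod_span G f g \<Longrightarrow> eq_mod_span G g h \<Longrightarrow> eq_mod_span G f h"
  unfolding eq_mod_span_def using fun_space.span_add by fastforce

lemma eq_mod_span_add:
  "eq_mod_span G f f' \<Longrightarrow> eq_mod_span G g g' \<Longrightarrow> eq_mod_span G (f + g) (f' + g')"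
  unfolding eq_mod_span_def using fun_space.span_add by (fastforce simp: algebra_simps)

lemma eq_mod_span_sum:
  "(\<And>i. i \<in> I \<Longrightarrow> eq_mod_span G (f i) (g i)) \<Longrightarrow> eq_mod_span G (\<Sum>i\<in>I. f i) (\<Sum>i\<in>I. g i)"
  by (induction I rule: infinite_finite_induct) (simp_all add: eq_mod_span_add)

lemma eq_mod_span_base: "f - g \<in> G \<Longrightarrow> eq_mod_span G f g"
  by (simp add: eq_mod_span_def fun_space.span_base)

lemma teq2_iff: "teq2 sa sb xs ys \<longleftrightarrow> eq_mod_span (gens2 sa sb) (free xs) (free ys)"
  by (simp add: teq2_def eq_mod_span_def rspan_eq_span fun_diff_def)

lemma teq3_iff: "teq3 sa sb sc xs ys \<longleftrightarrow> eq_mod_span (gens3 sa sb sc) (free xs) (free ys)"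
  by (simp add: teq3_def eq_mod_span_def rspan_eq_span fun_diff_def)

lemma teq2_trans [trans]: "teq2 sa sb xs ys \<Longrightarrow> teq2 sa sb ys zs \<Longrightarrow> teq2 sa sb xs zs"
  unfolding teq2_iff by (rule eq_mod_span_trans)

lemma gens2_alt: "gens2 sa sb =
     {ind (a + a', b) - ind (a, b) - ind (a', b) | a a' b. True} \<union>
     {ind (a, b + b') - ind (a, b) - ind (a, b') | a b b'. True} \<union>
     {ind (sa c a, b) - fscale c (ind (a, b)) | c a b. True} \<union>
     {ind (a, sb c b) - fscale c (ind (a, b)) | c a b. True}"
  by (simp add: gens2_def fun_diff_def fscale_def)

lemma gens3_alt: "gens3 sa sb sc =
     {ind (a + a', b, e) - ind (a, b, e) - ind (a', b, e) | a a' b e. True} \<union>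
     {ind (a, b + b', e) - ind (a, b, e) - ind (a, b', e) | a b b' e. True} \<union>
     {ind (a, b, e + e') - ind (a, b, e) - ind (a, b, e') | a b e e'. True} \<union>
     {ind (sa c a, b, e) - fscale c (ind (a, b, e)) | c a b e. True} \<union>
     {ind (a, sb c b, e) - fscale c (ind (a, b, e)) | c a b e. True} \<union>
     {ind (a, b, sc c e) - fscale c (ind (a, b, e)) | c a b e. True}"
  by (simp add: gens3_def fun_diff_def fscale_def)

lemma finite_supp_gens2: "g \<in> gens2 sa sb \<Longrightarrow> finite (supp g)"
  by (auto simp: gens2_alt)

lemma finite_supp_gens3: "g \<in> gens3 sa sb sc \<Longrightarrow> finite (supp g)"
  by (auto simp: gens3_alt)

context
  fixes sa :: "'k::field \<Rightarrow> 'a::ab_group_add \<Rightarrow> 'a" and sb :: "'k \<Rightarrow> 'b::ab_group_add \<Rightarrow> 'b"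
begin

lemma gens2_add_left: "ind (a + a', b) - ind (a, b) - ind (a', b) \<in> gens2 sa sb"
  unfolding gens2_alt by blast

lemma gens2_add_right: "ind (a, b + b') - ind (a, b) - ind (a, b') \<in> gens2 sa sb"
  unfolding gens2_alt by blast

lemma gens2_scale_left: "ind (sa c a, b) - fscale c (ind (a, b)) \<in> gens2 sa sb"
  unfolding gens2_alt by blast

lemma gens2_scale_right: "ind (a, sb c b) - fscale c (ind (a, b)) \<in> gens2 sa sb"
  unfolding gens2_alt by blast

lemma tensor_add_left: "eq_mod_span (gens2 sa sb) (ind (a + a', b)) (ind (a, b) + ind (a', b))"
  by (rule eq_mod_span_base) (simp add: gens2_add_left flip: diff_diff_eq)

lemma tensor_add_right: "eq_mod_span (gens2 sa sb) (ind (a, b + b')) (ind (a, b) + ind (a, b'))"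
  by (rule eq_mod_span_base) (simp add: gens2_add_right flip: diff_diff_eq)

lemma tensor_scale_swap: "eq_mod_span (gens2 sa sb) (ind (a, sb c b)) (ind (sa c a, b))"
  using eq_mod_span_base[OF gens2_scale_right] eq_mod_span_base[OF gens2_scale_left]
  by (blast intro: eq_mod_span_trans eq_mod_span_sym)

lemma tensor_zero_left:
  assumes "vector_space sa"
  shows "eq_mod_span (gens2 sa sb) (ind (0, b)) 0"
proof -
  interpret vector_space sa by fact
  show ?thesis
    using eq_mod_span_base[OF gens2_scale_left[of 0 0 b]] by (simp add: fscale_def zero_fun_def)
qed

lemma tensor_zero_right:
  assumes "vector_space sb"
  shows "eq_mod_span (gens2 sa sb) (ind (a, 0)) 0"
proof -
  interpret vector_space sb by fact
  show ?thesis
    using eq_mod_span_base[OF gens2_scale_right[of a 0 0]] by (simp add: fscale_def zero_fun_def)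
qed

lemma tensor_sum_right:
  assumes "vector_space sb"
  shows "eq_mod_span (gens2 sa sb) (ind (a, \<Sum>i\<in>I. h i)) (\<Sum>i\<in>I. ind (a, h i))"
proof (induction I rule: infinite_finite_induct)
  case (insert i I)
  have "eq_mod_span (gens2 sa sb) (ind (a, h i + (\<Sum>i\<in>I. h i))) (ind (a, h i) + ind (a, \<Sum>i\<in>I. h i))"
    by (rule tensor_add_right)
  also have "eq_mod_span (gens2 sa sb) \<dots> (ind (a, h i) + (\<Sum>i\<in>I. ind (a, h i)))"
    using insert.IH by (simp add: eq_mod_span_add)
  finally show ?case
    using insert.hyps by (simp del: plus_fun_apply)
qed (use tensor_zero_right[OF assms] in \<open>simp_all del: zero_fun_apply\<close>)

end

lemma teq2_sum_list_eq:
  assumes "teq2 sa sb xs ys" and "vector_space s"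
    and "\<And>a a' b. \<beta> (a + a', b) = \<beta> (a, b) + \<beta> (a', b)"
    and "\<And>a b b'. \<beta> (a, b + b') = \<beta> (a, b) + \<beta> (a, b')"
    and "\<And>c a b. \<beta> (sa c a, b) = s c (\<beta> (a, b))"
    and "\<And>c a b. \<beta> (a, sb c b) = s c (\<beta> (a, b))"
  shows "sum_list (map \<beta> xs) = sum_list (map \<beta> ys)"
proof -
  interpret V: vector_space s by fact
  have "free xs - free ys \<in> fun_space.span (gens2 sa sb)"
    using assms(1) by (simp add: teq2_iff eq_mod_span_def)
  then have "V.lincomb \<beta> (free xs - free ys) \<in> V.span (V.lincomb \<beta> ` gens2 sa sb)"
    by (rule V.lincomb_span) (rule finite_supp_gens2)
  moreover have "V.lincomb \<beta> ` gens2 sa sb \<subseteq> {0}"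
    by (auto simp: gens2_alt V.lincomb_diff V.lincomb_fscale assms(3-6))
  ultimately have "V.lincomb \<beta> (free xs - free ys) = 0"
    using V.span_mono[of _ "{0}"] by auto
  then show ?thesis
    by (simp add: V.lincomb_diff V.lincomb_free)
qed

section \<open>Linear functionals and contractions\<close>

abbreviation linear_functional :: "('k::field \<Rightarrow> 'v::ab_group_add \<Rightarrow> 'v) \<Rightarrow> ('v \<Rightarrow> 'k) \<Rightarrow> bool" where
  "linear_functional s \<phi> \<equiv> Vector_Spaces.linear s (*) \<phi>"

lemma vector_space_times: "vector_space ((*) :: 'k::field \<Rightarrow> 'k \<Rightarrow> 'k)"
  by unfold_locales (simp_all add: algebra_simps)

context vector_space
begin

lemma extend_linear_functional:
  assumes S: "subspace S"
    and add: "\<And>x y. x \<in> S \<Longrightarrow> y \<in> S \<Longrightarrow> f (x + y) = f x + f y"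
    and scale: "\<And>c x. x \<in> S \<Longrightarrow> f (scale c x) = c * f x"
  obtains g where "linear_functional scale g" "\<And>x. x \<in> S \<Longrightarrow> g x = f x"
proof -
  interpret vector_space_pair scale "(*)"
    by (simp add: vector_space_pair_def vector_space_axioms vector_space_times)
  obtain B where B: "B \<subseteq> S" "independent B" "S \<subseteq> span B"
    by (rule basis_exists)
  obtain g where g: "linear_functional scale g" "\<And>x. x \<in> B \<Longrightarrow> g x = f x"
    using linear_independent_extend[OF B(2)] by blast
  have "x \<in> S \<and> g x = f x" if "x \<in> span B" for x
    using that
  proof (induction rule: span_induct_alt)
    case base
    then show ?case
      using scale[of 0 0] subspace_0[OF S] linear_0[OF g(1)] by simp
  next
    case (step c x y)
    then have "x \<in> S" "scale c x \<in> S"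
      using B(1) subspace_scale[OF S] by auto
    with step show ?case
      using g(2)[OF step.hyps(1)] add scale subspace_add[OF S]
      by (simp add: linear_add[OF g(1)] linear_scale[OF g(1)])
  qed
  with g(1) B(3) show ?thesis
    using that by blast
qed

lemma dual_basis_exists:
  assumes "finite F"
  obtains B \<psi> where "B \<subseteq> F" "\<And>b. linear_functional scale (\<psi> b)"
    "\<And>x. x \<in> F \<Longrightarrow> (\<Sum>b\<in>B. scale (\<psi> b x) b) = x"
proof -
  obtain B where B: "B \<subseteq> F" "independent B" "F \<subseteq> span B"
    by (rule basis_exists)
  let ?B' = "extend_basis B"
  have "finite B"
    using B(1) assms by (rule finite_subset)
  show ?thesis
  proof (rule that[of B "\<lambda>b x. representation ?B' x b"])
    show "B \<subseteq> F"
      by (fact B(1))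
  next
    show "linear_functional scale (\<lambda>x. representation ?B' x b)" for b
      using B(2) by (intro linear_representation independent_extend_basis span_extend_basis)
  next
    fix x assume "x \<in> F"
    then have "x \<in> span B"
      using B(3) by blast
    moreover have "representation ?B' x = representation B x"
      using B(2) \<open>x \<in> span B\<close>
      by (intro representation_extend independent_extend_basis extend_basis_superset)
    ultimately show "(\<Sum>b\<in>B. scale (representation ?B' x b) b) = x"
      using sum_representation_eq[OF B(2) _ \<open>finite B\<close> order_refl] by simp
  qed
qed

lemma finitely_spanned_subspace:
  assumes "subspace S" "finite T" "S \<subseteq> span T"
  shows "\<exists>B. finite B \<and> span B = S"
proof -
  obtain B where B: "B \<subseteq> S" "independent B" "S \<subseteq> span B"
    by (rule basis_exists)
  have "finite B"
    using independent_span_bound[OF assms(2) B(2)] B(1) assms(3) by auto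
  moreover have "span B = S"
    using B(3) span_minimal[OF B(1) assms(1)] by auto
  ultimately show ?thesis by blast
qed

end

definition contract :: "('k::field \<Rightarrow> 'a::ab_group_add \<Rightarrow> 'a) \<Rightarrow> ('b \<Rightarrow> 'k) \<Rightarrow> ('a \<times> 'b) list \<Rightarrow> 'a" where
  "contract s \<phi> xs = (\<Sum>(a, b)\<leftarrow>xs. s (\<phi> b) a)"

lemma contract_Nil [simp]: "contract s \<phi> [] = 0"
  and contract_Cons [simp]: "contract s \<phi> ((a, b) # xs) = s (\<phi> b) a + contract s \<phi> xs"
  and contract_append [simp]: "contract s \<phi> (xs @ ys) = contract s \<phi> xs + contract s \<phi> ys"
  by (simp_all add: contract_def)

lemma contract_cong:
  "(\<And>a b. (a, b) \<in> set xs \<Longrightarrow> \<phi> b = \<psi> b) \<Longrightarrow> contract s \<phi> xs = contract s \<psi> xs"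
  unfolding contract_def by (rule arg_cong[where f = sum_list], rule map_cong) auto

context vector_space
begin

lemma contract_in_span: "contract scale \<phi> xs \<in> span (fst ` set xs)"
proof (induction xs)
  case (Cons p xs)
  obtain a b where p: "p = (a, b)"
    by fastforce
  have "contract scale \<phi> xs \<in> span (fst ` set (p # xs))"
    using Cons.IH span_mono[of "fst ` set xs" "fst ` set (p # xs)"] by auto
  moreover have "scale (\<phi> b) a \<in> span (fst ` set (p # xs))"
    by (intro span_scale span_base) (simp add: p)
  ultimately show ?case
    by (simp add: p span_add)
qed (simp add: span_zero)

lemma contract_zero: "contract scale (\<lambda>_. 0) xs = 0"
  by (induction xs) (auto simp: contract_def)

lemma contract_add: "contract scale (\<lambda>x. \<phi> x + \<psi> x) xs = contract scale \<phi> xs + contract scale \<psi> xs"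
  by (induction xs) (auto simp: contract_def scale_left_distrib ac_simps)

lemma contract_scale: "contract scale (\<lambda>x. c * \<phi> x) xs = scale c (contract scale \<phi> xs)"
  by (induction xs) (auto simp: contract_def scale_right_distrib)

end

lemma free_map: "free (map f xs) = (\<Sum>x\<leftarrow>xs. ind (f x))"
  by (induction xs) simp_all

lemma eq_mod_span_map_free:
  assumes "eq_mod_span G (free xs) (free ys)" and "\<And>g. g \<in> G \<Longrightarrow> finite (supp g)"
    and "\<And>g. g \<in> G \<Longrightarrow> fun_space.lincomb (\<lambda>p. ind (f p)) g \<in> fun_space.span H"
  shows "eq_mod_span H (free (map f xs)) (free (map f ys))"
proof -
  have "fun_space.lincomb (\<lambda>p. ind (f p)) (free xs - free ys)
      \<in> fun_space.span (fun_space.lincomb (\<lambda>p. ind (f p)) ` G)"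
    using assms(1,2) unfolding eq_mod_span_def by (rule fun_space.lincomb_span)
  also have "\<dots> \<subseteq> fun_space.span H"
    using assms(3) by (intro fun_space.span_minimal) auto
  finally show ?thesis
    by (simp add: eq_mod_span_def fun_space.lincomb_diff fun_space.lincomb_free free_map)
qed

lemma teq3_contract_third:
  assumes "teq3 sa sb sc xs ys" and "vector_space sa" and "linear_functional sc \<phi>"
  shows "teq2 sa sb (map (\<lambda>(a, b, e). (sa (\<phi> e) a, b)) xs) (map (\<lambda>(a, b, e). (sa (\<phi> e) a, b)) ys)"
proof -
  interpret vector_space sa by fact
  have \<phi>: "\<phi> (x + y) = \<phi> x + \<phi> y" "\<phi> (sc c x) = c * \<phi> x" for x y c
    using assms(3) unfolding linear_iff by simp_all
  let ?f = "\<lambda>(a, b, e). (sa (\<phi> e) a, b)"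
  have scale_gen: "ind (sa (c * d) a, b) - fscale c (ind (sa d a, b)) \<in> gens2 sa sb"
      "ind (sa (d * c) a, b) - fscale c (ind (sa d a, b)) \<in> gens2 sa sb" for a b c d
    using gens2_scale_left[where sa = sa and sb = sb and c = c and a = "sa d a" and b = b]
    by (simp_all add: mult.commute)
  have "fun_space.lincomb (\<lambda>p. ind (?f p)) g \<in> gens2 sa sb" if "g \<in> gens3 sa sb sc" for g
    using that unfolding gens3_alt
    by (auto simp: fun_space.lincomb_diff fun_space.lincomb_fscale \<phi> scale_right_distrib scale_left_distrib
        gens2_add_left gens2_add_right gens2_scale_right scale_gen)
  then show ?thesis
    using assms(1) unfolding teq3_iff teq2_iff
    by (auto intro: eq_mod_span_map_free finite_supp_gens3 fun_space.span_base)
qed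

lemma teq2_append:
  "teq2 sa sb xs xs' \<Longrightarrow> teq2 sa sb ys ys' \<Longrightarrow> teq2 sa sb (xs @ ys) (xs' @ ys')"
  unfolding teq2_iff by (simp add: eq_mod_span_add)

lemma teq2_apply_contract:
  assumes "vector_space sa" and V: "module.subspace sa V"
    and add: "\<And>x y. x \<in> V \<Longrightarrow> y \<in> V \<Longrightarrow> teq2 sa sb (r (x + y)) (r x @ r y)"
    and scale: "\<And>c x. x \<in> V \<Longrightarrow> teq2 sa sb (r (sa c x)) (map (\<lambda>(a, b). (sa c a, b)) (r x))"
    and "fst ` set L \<subseteq> V"
  shows "teq2 sa sb (r (contract sa \<phi> L))
    (concat (map (\<lambda>(x, e). map (\<lambda>(a, b). (sa (\<phi> e) a, b)) (r x)) L))"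
  using \<open>fst ` set L \<subseteq> V\<close>
proof (induction L)
  case Nil
  interpret vector_space sa by fact
  have "eq_mod_span (gens2 sa sb) (free (r 0)) (free (r 0) + free (r 0))"
    using add[OF subspace_0[OF V] subspace_0[OF V]] by (simp add: teq2_iff)
  then have "- free (r 0) \<in> fun_space.span (gens2 sa sb)"
    by (simp add: eq_mod_span_def)
  then show ?case
    using fun_space.span_neg by (fastforce simp: teq2_iff eq_mod_span_def)
next
  case (Cons p L)
  interpret vector_space sa by fact
  obtain x e where p: "p = (x, e)"
    by fastforce
  have "x \<in> V" "fst ` set L \<subseteq> V"
    using Cons.prems p by auto
  moreover have "contract sa \<phi> L \<in> V"
    using contract_in_span span_minimal[OF \<open>fst ` set L \<subseteq> V\<close> V] by blast
  ultimately have "teq2 sa sb (r (contract sa \<phi> (p # L))) (r (sa (\<phi> e) x) @ r (contract sa \<phi> L))"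
    using add subspace_scale[OF V] p by simp
  also have "teq2 sa sb \<dots> (map (\<lambda>(a, b). (sa (\<phi> e) a, b)) (r x)
      @ concat (map (\<lambda>(x, e). map (\<lambda>(a, b). (sa (\<phi> e) a, b)) (r x)) L))"
    using Cons.IH scale \<open>x \<in> V\<close> \<open>fst ` set L \<subseteq> V\<close> by (intro teq2_append)
  finally show ?case
    using p by simp
qed

lemma free_eq_mod_span_expansion:
  assumes "vector_space sa" and "vector_space sb" and "finite B"
    and "\<And>a g. (a, g) \<in> set P \<Longrightarrow> (\<Sum>b\<in>B. sb (\<psi> b g) b) = g"
  shows "eq_mod_span (gens2 sa sb) (free P) (\<Sum>b\<in>B. ind (contract sa (\<psi> b) P, b))"
  using assms(4)
proof (induction P)
  case Nil
  have "eq_mod_span (gens2 sa sb) (\<Sum>b\<in>B. ind (0, b)) (\<Sum>b\<in>B. 0)"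
    by (intro eq_mod_span_sum tensor_zero_left assms(1))
  from eq_mod_span_sym[OF this] show ?case
    by (simp del: zero_fun_apply)
next
  case (Cons q P)
  obtain a g where q: "q = (a, g)"
    by fastforce
  have IH: "eq_mod_span (gens2 sa sb) (free P) (\<Sum>b\<in>B. ind (contract sa (\<psi> b) P, b))"
    using Cons.IH Cons.prems by auto
  have "(\<Sum>b\<in>B. sb (\<psi> b g) b) = g"
    using Cons.prems q by auto
  then have "eq_mod_span (gens2 sa sb) (ind (a, g)) (ind (a, \<Sum>b\<in>B. sb (\<psi> b g) b))"
    by simp
  also have "eq_mod_span (gens2 sa sb) \<dots> (\<Sum>b\<in>B. ind (a, sb (\<psi> b g) b))"
    by (rule tensor_sum_right[OF assms(2)])
  also have "eq_mod_span (gens2 sa sb) \<dots> (\<Sum>b\<in>B. ind (sa (\<psi> b g) a, b))"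
    by (intro eq_mod_span_sum tensor_scale_swap)
  finally have "eq_mod_span (gens2 sa sb) (free (q # P))
      ((\<Sum>b\<in>B. ind (sa (\<psi> b g) a, b)) + (\<Sum>b\<in>B. ind (contract sa (\<psi> b) P, b)))"
    using eq_mod_span_add[OF _ IH] q by simp
  also have "eq_mod_span (gens2 sa sb) \<dots> (\<Sum>b\<in>B. ind (contract sa (\<psi> b) (q # P), b))"
    unfolding q contract_Cons sum.distrib[symmetric]
    by (intro eq_mod_span_sum eq_mod_span_sym[OF tensor_add_left])
  finally show ?case .
qed

lemma teq2_expansion_snd:
  assumes "vector_space sa" and "vector_space sb"
  obtains bs \<psi> where "set bs \<subseteq> snd ` set P" and "\<And>b. linear_functional sb (\<psi> b)"
    and "teq2 sa sb P (map (\<lambda>b. (contract sa (\<psi> b) P, b)) bs)"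
proof -
  interpret vector_space sb by fact
  obtain B \<psi> where B: "B \<subseteq> snd ` set P" "\<And>b. linear_functional sb (\<psi> b)"
    and \<psi>: "\<And>g. g \<in> snd ` set P \<Longrightarrow> (\<Sum>b\<in>B. sb (\<psi> b g) b) = g"
    by (rule dual_basis_exists[of "snd ` set P"]) blast+
  have "finite B"
    using B(1) finite_subset by blast
  then obtain bs where bs: "set bs = B" "distinct bs"
    using finite_distinct_list by blast
  have "teq2 sa sb P (map (\<lambda>b. (contract sa (\<psi> b) P, b)) bs)"
    unfolding teq2_iff free_map sum_list_distinct_conv_sum_set[OF bs(2)] bs(1)
    using \<psi> by (intro free_eq_mod_span_expansion assms \<open>finite B\<close>) force
  with B bs(1) that show ?thesis
    by blast
qed

section \<open>The subcomodule generated by an element\<close>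

locale comodule_structure =
  C: vector_space sC + M: vector_space sM
  for sC :: "'k::field \<Rightarrow> 'c::ab_group_add \<Rightarrow> 'c" and sM :: "'k \<Rightarrow> 'm::ab_group_add \<Rightarrow> 'm" +
  fixes C :: "'o \<Rightarrow> 'o \<Rightarrow> 'c set"
    and delta :: "'o \<Rightarrow> 'o \<Rightarrow> 'o \<Rightarrow> 'c \<Rightarrow> ('c \<times> 'c) list"
    and eps :: "'o \<Rightarrow> 'c \<Rightarrow> 'k"
    and M :: "'o \<Rightarrow> 'm set"
    and rho :: "'o \<Rightarrow> 'o \<Rightarrow> 'm \<Rightarrow> ('m \<times> 'c) list"
  assumes subspace_C: "C.subspace (C X Y)"
    and delta_mem: "f \<in> C X Z \<Longrightarrow> set (delta X Y Z f) \<subseteq> C Y Z \<times> C X Y"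
    and delta_add: "f \<in> C X Z \<Longrightarrow> g \<in> C X Z \<Longrightarrow>
      teq2 sC sC (delta X Y Z (f + g)) (delta X Y Z f @ delta X Y Z g)"
    and delta_scale: "f \<in> C X Z \<Longrightarrow>
      teq2 sC sC (delta X Y Z (sC c f)) (map (\<lambda>(a, b). (sC c a, b)) (delta X Y Z f))"
    and eps_add: "f \<in> C X X \<Longrightarrow> g \<in> C X X \<Longrightarrow> eps X (f + g) = eps X f + eps X g"
    and eps_scale: "f \<in> C X X \<Longrightarrow> eps X (sC c f) = c * eps X f"
    and subspace_M: "M.subspace (M X)"
    and rho_mem: "m \<in> M X \<Longrightarrow> set (rho X Y m) \<subseteq> M Y \<times> C X Y"
    and rho_add: "m \<in> M X \<Longrightarrow> n \<in> M X \<Longrightarrow>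
      teq2 sM sC (rho X Y (m + n)) (rho X Y m @ rho X Y n)"
    and rho_scale: "m \<in> M X \<Longrightarrow>
      teq2 sM sC (rho X Y (sM c m)) (map (\<lambda>(a, b). (sM c a, b)) (rho X Y m))"
    and rho_coassoc: "m \<in> M X \<Longrightarrow> teq3 sM sC sC
      (concat (map (\<lambda>(n, b). map (\<lambda>(n0, n1). (n0, n1, b)) (rho Z Y n)) (rho X Z m)))
      (concat (map (\<lambda>(n, g). map (\<lambda>(g1, g2). (n, g1, g2)) (delta X Z Y g)) (rho X Y m)))"
    and rho_counit: "m \<in> M X \<Longrightarrow> contract sM (eps X) (rho X X m) = m"

lemma comodule_structureI:
  assumes "coalgebra_so sC C delta eps" and "right_comodule sC C delta eps sM M rho"
  shows "comodule_structure sC sM C delta eps M rho"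
  using assms unfolding coalgebra_so_def right_comodule_def comodule_structure_def
    comodule_structure_axioms_def contract_def
  by simp

context comodule_structure
begin

lemma linear_functional_iff:
  "linear_functional sC \<phi> \<longleftrightarrow> (\<forall>x y. \<phi> (x + y) = \<phi> x + \<phi> y) \<and> (\<forall>c x. \<phi> (sC c x) = c * \<phi> x)"
  by (simp add: linear_iff C.vector_space_axioms vector_space_times)

text \<open>\<open>contractions X m\<close> is the comodule \<open>N\<close> above. Functionals on the ambient space suffice,
  since every functional on \<open>C(X,Y)\<close> extends (see \<open>contract_mem_contractions\<close>).\<close>

definition contractions :: "'o \<Rightarrow> 'm \<Rightarrow> 'o \<Rightarrow> 'm set" where
  "contractions X m Y = {contract sM \<phi> (rho X Y m) | \<phi>. linear_functional sC \<phi>}"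

lemma contractionsI: "linear_functional sC \<phi> \<Longrightarrow> contract sM \<phi> (rho X Y m) \<in> contractions X m Y"
  unfolding contractions_def by blast

lemma contractionsE:
  assumes "n \<in> contractions X m Y"
  obtains \<phi> where "linear_functional sC \<phi>" and "n = contract sM \<phi> (rho X Y m)"
  using assms unfolding contractions_def by blast

lemma subspace_contractions: "M.subspace (contractions X m Y)"
  unfolding M.subspace_def
proof (intro conjI ballI allI)
  have "linear_functional sC (\<lambda>_. 0)"
    by (simp add: linear_functional_iff)
  from contractionsI[OF this] show "0 \<in> contractions X m Y"
    by (simp add: M.contract_zero)
next
  fix c n assume "n \<in> contractions X m Y"
  then obtain \<phi> where "linear_functional sC \<phi>" "n = contract sM \<phi> (rho X Y m)"
    by (rule contractionsE)
  moreover from this(1) have "linear_functional sC (\<lambda>f. c * \<phi> f)"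
    by (simp add: linear_functional_iff algebra_simps)
  ultimately show "sM c n \<in> contractions X m Y"
    using contractionsI[of "\<lambda>f. c * \<phi> f"] by (simp add: M.contract_scale)
next
  fix n n' assume "n \<in> contractions X m Y" "n' \<in> contractions X m Y"
  then obtain \<phi> \<phi>' where "linear_functional sC \<phi>" "n = contract sM \<phi> (rho X Y m)"
    "linear_functional sC \<phi>'" "n' = contract sM \<phi>' (rho X Y m)"
    by (metis contractionsE)
  moreover from this(1,3) have "linear_functional sC (\<lambda>f. \<phi> f + \<phi>' f)"
    by (simp add: linear_functional_iff algebra_simps)
  ultimately show "n + n' \<in> contractions X m Y"
    using contractionsI[of "\<lambda>f. \<phi> f + \<phi>' f"] by (simp add: M.contract_add)
qed

lemma contractions_subset_span: "contractions X m Y \<subseteq> M.span (fst ` set (rho X Y m))"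
  by (auto simp: contractions_def M.contract_in_span)

lemma finite_span_contractions: "\<exists>B. finite B \<and> M.span B = contractions X m Y"
  by (rule M.finitely_spanned_subspace[OF subspace_contractions _ contractions_subset_span]) simp

lemma contractions_subset:
  assumes "m \<in> M X"
  shows "contractions X m Y \<subseteq> M Y"
proof -
  have "fst ` set (rho X Y m) \<subseteq> M Y"
    using rho_mem[OF assms, of Y] by auto
  then have "M.span (fst ` set (rho X Y m)) \<subseteq> M Y"
    by (rule M.span_minimal[OF _ subspace_M])
  with contractions_subset_span show ?thesis
    by blast
qed

lemma contract_mem_contractions:
  assumes "m \<in> M X"
    and "\<And>f g. f \<in> C X Y \<Longrightarrow> g \<in> C X Y \<Longrightarrow> \<chi> (f + g) = \<chi> f + \<chi> g"
    and "\<And>c f. f \<in> C X Y \<Longrightarrow> \<chi> (sC c f) = c * \<chi> f"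
  shows "contract sM \<chi> (rho X Y m) \<in> contractions X m Y"
proof -
  obtain \<phi> where "linear_functional sC \<phi>" and \<phi>: "\<And>f. f \<in> C X Y \<Longrightarrow> \<phi> f = \<chi> f"
    using C.extend_linear_functional[OF subspace_C assms(2,3)] by blast
  moreover have "contract sM \<phi> (rho X Y m) = contract sM \<chi> (rho X Y m)"
    using rho_mem[OF assms(1)] \<phi> by (intro contract_cong) auto
  ultimately show ?thesis
    by (metis contractionsI)
qed

lemma mem_contractions_self: "m \<in> M X \<Longrightarrow> m \<in> contractions X m X"
  using contract_mem_contractions[of m X X "eps X"] eps_add eps_scale rho_counit by simp

definition convolution :: "'o \<Rightarrow> 'o \<Rightarrow> 'o \<Rightarrow> ('c \<Rightarrow> 'k) \<Rightarrow> ('c \<Rightarrow> 'k) \<Rightarrow> 'c \<Rightarrow> 'k" where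
  "convolution X Y Z \<psi> \<phi> g = (\<Sum>(g1, g2)\<leftarrow>delta X Y Z g. \<psi> g1 * \<phi> g2)"

lemma
  assumes "linear_functional sC \<psi>" and "linear_functional sC \<phi>" and "f \<in> C X Z"
  shows convolution_add: "g \<in> C X Z \<Longrightarrow>
      convolution X Y Z \<psi> \<phi> (f + g) = convolution X Y Z \<psi> \<phi> f + convolution X Y Z \<psi> \<phi> g"
    and convolution_scale: "convolution X Y Z \<psi> \<phi> (sC c f) = c * convolution X Y Z \<psi> \<phi> f"
proof -
  have bilinear:
    "\<And>a a' b. \<psi> (a + a') * \<phi> b = \<psi> a * \<phi> b + \<psi> a' * \<phi> b"
    "\<And>a b b'. \<psi> a * \<phi> (b + b') = \<psi> a * \<phi> b + \<psi> a * \<phi> b'"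
    "\<And>c a b. \<psi> (sC c a) * \<phi> b = c * (\<psi> a * \<phi> b)"
    "\<And>c a b. \<psi> a * \<phi> (sC c b) = c * (\<psi> a * \<phi> b)"
    using assms(1,2) by (simp_all add: linear_functional_iff algebra_simps)
  show "g \<in> C X Z \<Longrightarrow>
      convolution X Y Z \<psi> \<phi> (f + g) = convolution X Y Z \<psi> \<phi> f + convolution X Y Z \<psi> \<phi> g"
    unfolding convolution_def
    using teq2_sum_list_eq[OF delta_add[OF assms(3)] vector_space_times, of g "\<lambda>(a, b). \<psi> a * \<phi> b"]
    by (simp add: bilinear)
  have "convolution X Y Z \<psi> \<phi> (sC c f)
      = (\<Sum>(g1, g2)\<leftarrow>map (\<lambda>(a, b). (sC c a, b)) (delta X Y Z f). \<psi> g1 * \<phi> g2)"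
    unfolding convolution_def
    using teq2_sum_list_eq[OF delta_scale[OF assms(3)] vector_space_times, of "\<lambda>(a, b). \<psi> a * \<phi> b"]
    by (simp add: bilinear)
  also have "\<dots> = c * convolution X Y Z \<psi> \<phi> f"
  proof -
    have "(\<Sum>(g1, g2)\<leftarrow>map (\<lambda>(a, b). (sC c a, b)) K. \<psi> g1 * \<phi> g2)
        = c * (\<Sum>(g1, g2)\<leftarrow>K. \<psi> g1 * \<phi> g2)" for K
      using assms(1) by (induction K) (auto simp: linear_functional_iff algebra_simps)
    then show ?thesis
      unfolding convolution_def .
  qed
  finally show "convolution X Y Z \<psi> \<phi> (sC c f) = c * convolution X Y Z \<psi> \<phi> f" .
qed

lemma contract_concat_delta:
  "contract sM \<psi> (concat (map (\<lambda>(n, g). map (\<lambda>(g1, g2). (sM (\<phi> g2) n, g1)) (delta X Y Z g)) L))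
    = contract sM (convolution X Y Z \<psi> \<phi>) L"
proof (induction L)
  case (Cons p L)
  obtain n g where "p = (n, g)"
    by fastforce
  moreover have "contract sM \<psi> (map (\<lambda>(g1, g2). (sM (\<phi> g2) n, g1)) K)
      = sM (\<Sum>(g1, g2)\<leftarrow>K. \<psi> g1 * \<phi> g2) n" for K
    by (induction K) (auto simp: M.scale_left_distrib)
  ultimately show ?case
    using Cons by (simp add: convolution_def)
qed simp

lemma rho_contract:
  assumes "m \<in> M X" and "linear_functional sC \<phi>"
  shows "teq2 sM sC (rho Y Z (contract sM \<phi> (rho X Y m)))
    (concat (map (\<lambda>(n, g). map (\<lambda>(g1, g2). (sM (\<phi> g2) n, g1)) (delta X Y Z g)) (rho X Z m)))"
proof -
  let ?contract3 = "map (\<lambda>(a, b, e). (sM (\<phi> e) a, b))"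
  have "teq2 sM sC (rho Y Z (contract sM \<phi> (rho X Y m)))
      (concat (map (\<lambda>(n, e). map (\<lambda>(a, b). (sM (\<phi> e) a, b)) (rho Y Z n)) (rho X Y m)))"
    using rho_mem[OF assms(1), of Y]
    by (intro teq2_apply_contract[OF M.vector_space_axioms subspace_M rho_add rho_scale]) auto
  also have "\<dots> = ?contract3 (concat (map (\<lambda>(n, b). map (\<lambda>(n0, n1). (n0, n1, b)) (rho Y Z n)) (rho X Y m)))"
    by (simp add: map_concat split_def comp_def)
  also have "teq2 sM sC \<dots>
      (?contract3 (concat (map (\<lambda>(n, g). map (\<lambda>(g1, g2). (n, g1, g2)) (delta X Y Z g)) (rho X Z m))))"
    using rho_coassoc[OF assms(1)] M.vector_space_axioms assms(2) by (rule teq3_contract_third)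
  also have "\<dots> = concat (map (\<lambda>(n, g). map (\<lambda>(g1, g2). (sM (\<phi> g2) n, g1)) (delta X Y Z g)) (rho X Z m))"
    by (simp add: map_concat split_def comp_def)
  finally show ?thesis .
qed

lemma rho_contractions:
  assumes "m \<in> M X" and "n \<in> contractions X m Y"
  shows "\<exists>ys. set ys \<subseteq> contractions X m Z \<times> C Y Z \<and> teq2 sM sC (rho Y Z n) ys"
proof -
  obtain \<phi> where \<phi>: "linear_functional sC \<phi>" and n: "n = contract sM \<phi> (rho X Y m)"
    using assms(2) by (rule contractionsE)
  define T where "T = concat (map (\<lambda>(n, g). map (\<lambda>(g1, g2). (sM (\<phi> g2) n, g1)) (delta X Y Z g)) (rho X Z m))"
  obtain bs \<psi> where bs: "set bs \<subseteq> snd ` set T" and \<psi>: "\<And>b. linear_functional sC (\<psi> b)"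
    and expansion: "teq2 sM sC T (map (\<lambda>b. (contract sM (\<psi> b) T, b)) bs)"
    by (rule teq2_expansion_snd[OF M.vector_space_axioms C.vector_space_axioms, where P = T]) blast
  have "snd ` set T \<subseteq> C Y Z"
    using rho_mem[OF assms(1), of Z] delta_mem by (fastforce simp: T_def)
  moreover have "contract sM (\<psi> b) T \<in> contractions X m Z" for b
    unfolding T_def contract_concat_delta
    using assms(1) convolution_add[OF \<psi> \<phi>] convolution_scale[OF \<psi> \<phi>]
    by (rule contract_mem_contractions)
  moreover have "teq2 sM sC (rho Y Z n) (map (\<lambda>b. (contract sM (\<psi> b) T, b)) bs)"
    using rho_contract[OF assms(1) \<phi>] expansion unfolding n T_def by (rule teq2_trans)
  ultimately show ?thesis
    using bs by (intro exI[of _ "map (\<lambda>b. (contract sM (\<psi> b) T, b)) bs"]) auto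
qed

lemma subcomodule_contractions:
  assumes "m \<in> M X"
  shows "subcomodule sC C sM M rho (contractions X m)"
  unfolding subcomodule_def
  using subspace_contractions contractions_subset[OF assms] rho_contractions[OF assms] by blast

end

theorem proposition2p4:
  fixes sC :: "'k::field \<Rightarrow> 'c::ab_group_add \<Rightarrow> 'c"
    and C :: "'o \<Rightarrow> 'o \<Rightarrow> 'c set"
    and delta :: "'o \<Rightarrow> 'o \<Rightarrow> 'o \<Rightarrow> 'c \<Rightarrow> ('c \<times> 'c) list"
    and eps :: "'o \<Rightarrow> 'c \<Rightarrow> 'k"
    and sM :: "'k \<Rightarrow> 'm::ab_group_add \<Rightarrow> 'm"
    and M :: "'o \<Rightarrow> 'm set"
    and rho :: "'o \<Rightarrow> 'o \<Rightarrow> 'm \<Rightarrow> ('m \<times> 'c) list"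
    and X :: 'o and m :: 'm
  assumes "coalgebra_so sC C delta eps"
    and "right_comodule sC C delta eps sM M rho"
    and "m \<in> M X"
  shows "\<exists>N. subcomodule sC C sM M rho N \<and> m \<in> N X \<and>
           (\<forall>Y. \<exists>B. finite B \<and> module.span sM B = N Y)"
proof -
  interpret comodule_structure sC sM C delta eps M rho
    using assms(1,2) by (rule comodule_structureI)
  show ?thesis
    using subcomodule_contractions[OF assms(3)] mem_contractions_self[OF assms(3)]
      finite_span_contractions by blast
qed

end
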